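(* Let $p(n)$ be a function. For each function $L:\{0,1\}^n\to\{0,1\}$ let $|\psi_L\rangle$ be a $p(n)$-qubit state. Let $\mathcal{Q}$ be any (computationally unbounded) quantum algorithm that, on input $x\in\{0,1\}^n$, performs a measurement depending only on $x$ (and not on $L$) on $|\psi_L\rangle$ and outputs a bit $\mathcal{Q}(x,|\psi_L\rangle)$. Then $$\Pr_{x,L}[\mathcal{Q}(x,|\psi_L\rangle)=L(x)]\le\frac12+O\Big(\big(p(n)/2^n\big)^{1/3}\Big),$$ where $L$ is a uniformly random function and $x$ is uniform in $\{0,1\}^n$. *)

theory Defs
  imports "HOL-Library.FuncSet" "Jordan_Normal_Form.Matrix" "Jordan_Normal_Form.Conjugate"
begin

definition qdim :: "nat \<Rightarrow> nat" where "qdim m = 2 ^ m"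

definition pure_state :: "nat \<Rightarrow> complex vec \<Rightarrow> bool" where
  "pure_state m v \<longleftrightarrow> v \<in> carrier_vec (qdim m) \<and> cscalar_prod v v = 1"

definition hermitian_mat :: "complex mat \<Rightarrow> bool" where
  "hermitian_mat A \<longleftrightarrow> dim_row A = dim_col A \<and>
     (\<forall>i < dim_row A. \<forall>j < dim_col A. A $$ (i, j) = cnj (A $$ (j, i)))"

definition psd_mat :: "nat \<Rightarrow> complex mat \<Rightarrow> bool" where
  "psd_mat d A \<longleftrightarrow> A \<in> carrier_mat d d \<and> hermitian_mat A \<and>
     (\<forall>v \<in> carrier_vec d. Re (cscalar_prod (A *\<^sub>v v) v) \<ge> 0)"

definition binary_povm :: "nat \<Rightarrow> complex mat \<Rightarrow> complex mat \<Rightarrow> bool" where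
  "binary_povm d E0 E1 \<longleftrightarrow> psd_mat d E0 \<and> psd_mat d E1 \<and> E0 + E1 = 1\<^sub>m d"

definition outcome_prob :: "complex mat \<Rightarrow> complex vec \<Rightarrow> real" where
  "outcome_prob E psi = Re (cscalar_prod (E *\<^sub>v psi) psi)"

definition bitstrings :: "nat \<Rightarrow> bool list set" where
  "bitstrings n = {xs. length xs = n}"

definition boolfuns :: "nat \<Rightarrow> (bool list \<Rightarrow> bool) set" where
  "boolfuns n = bitstrings n \<rightarrow>\<^sub>E (UNIV :: bool set)"

text \<open>Success probability Pr_{x,L}[Q(x,psi_L) = L(x)], with x and L uniform, where on input x
  the algorithm performs the binary measurement (M x False, M x True) and outputs the outcome.\<close>
definition success_prob ::
  "nat \<Rightarrow> ((bool list \<Rightarrow> bool) \<Rightarrow> complex vec) \<Rightarrow> (bool list \<Rightarrow> bool \<Rightarrow> complex mat) \<Rightarrow> real" where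
  "success_prob n psi M =
     (\<Sum>x \<in> bitstrings n. \<Sum>L \<in> boolfuns n. outcome_prob (M x (L x)) (psi L))
       / (real (card (bitstrings n)) * real (card (boolfuns n)))"

end

theory Submission
  imports Defs "HOL-Analysis.Convex"
begin

text \<open>
  On input \<open>x\<close> the measurement is described by the observable \<open>A\<^sub>x = M\<^sub>x(1) - M\<^sub>x(0)\<close>,
  a Hermitian contraction, and the success probability equals
  \<open>1/2 + (\<Sum>\<^sub>L \<langle>S\<^sub>L \<psi>\<^sub>L, \<psi>\<^sub>L\<rangle>) / (2 N 2^N)\<close> where \<open>N = 2^n\<close> and \<open>S\<^sub>L = \<Sum>\<^sub>x \<plusminus>A\<^sub>x\<close>, the sign
  being \<open>+\<close> iff \<open>L(x)\<close> holds. For \<open>k\<close> a power of two, iterated Cauchy-Schwarz gives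
  \<open>|\<langle>S\<^sub>L \<psi>\<^sub>L, \<psi>\<^sub>L\<rangle>|^(2k) \<le> \<parallel>S\<^sub>L^k \<psi>\<^sub>L\<parallel>\<^sup>2 \<le> \<Sum>\<^sub>i \<parallel>S\<^sub>L^k e\<^sub>i\<parallel>\<^sup>2\<close>. Expanding \<open>S\<^sub>L^k\<close> into words
  in the \<open>A\<^sub>x\<close>, the sum over \<open>L\<close> of a product of signs is nonnegative and every word is a
  contraction, so \<open>\<Sum>\<^sub>L \<parallel>S\<^sub>L^k u\<parallel>\<^sup>2\<close> is at most the \<open>2k\<close>-th moment of a sum of \<open>N\<close> random
  signs, which is at most \<open>2 \<cdot> 2^N (12 k N)^k\<close>. With \<open>p \<le> k \<le> 2p\<close> the \<open>2^p\<close> basis vectors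
  cost only a factor \<open>2^k\<close>, and the power mean inequality bounds the average bias by
  \<open>5 \<surd>(p/N) \<le> 5 (p/N)^(1/3)\<close> when \<open>2p \<le> N\<close>; otherwise the claim is trivial.
\<close>

section \<open>Linear algebra on \<open>\<complex>\<^sup>d\<close>\<close>

text \<open>
  Vectors are functions \<open>nat \<Rightarrow> complex\<close> and matrices functions \<open>nat \<Rightarrow> nat \<Rightarrow> complex\<close>,
  of which only the entries below the dimension \<open>d\<close> matter. This keeps the combinatorial
  expansions below free of carrier bookkeeping.
\<close>

definition cinner :: "nat \<Rightarrow> (nat \<Rightarrow> complex) \<Rightarrow> (nat \<Rightarrow> complex) \<Rightarrow> complex" where
  "cinner d u v = (\<Sum>i<d. u i * cnj (v i))"

definition sqnorm :: "nat \<Rightarrow> (nat \<Rightarrow> complex) \<Rightarrow> real" where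
  "sqnorm d u = (\<Sum>i<d. (cmod (u i))^2)"

definition mat_app :: "nat \<Rightarrow> (nat \<Rightarrow> nat \<Rightarrow> complex) \<Rightarrow> (nat \<Rightarrow> complex) \<Rightarrow> nat \<Rightarrow> complex" where
  "mat_app d A v = (\<lambda>i. if i < d then \<Sum>j<d. A i j * v j else 0)"

definition hermitian_on :: "nat \<Rightarrow> (nat \<Rightarrow> nat \<Rightarrow> complex) \<Rightarrow> bool" where
  "hermitian_on d A \<longleftrightarrow> (\<forall>i<d. \<forall>j<d. A i j = cnj (A j i))"

definition contraction_on :: "nat \<Rightarrow> (nat \<Rightarrow> nat \<Rightarrow> complex) \<Rightarrow> bool" where
  "contraction_on d A \<longleftrightarrow> (\<forall>v. sqnorm d (mat_app d A v) \<le> sqnorm d v)"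

definition basis_fn :: "nat \<Rightarrow> nat \<Rightarrow> complex" where
  "basis_fn i = (\<lambda>j. if j = i then 1 else 0)"

lemma cinner_self: "cinner d u u = complex_of_real (sqnorm d u)"
  unfolding cinner_def sqnorm_def of_real_sum
  by (intro sum.cong refl) (metis complex_norm_square of_real_power)

lemma sqnorm_nonneg: "0 \<le> sqnorm d u"
  unfolding sqnorm_def by (simp add: sum_nonneg)

lemma cinner_commute: "cinner d v u = cnj (cinner d u v)"
  unfolding cinner_def by (simp add: mult.commute)

lemma cinner_add_left: "cinner d (\<lambda>i. u i + v i) w = cinner d u w + cinner d v w"
  unfolding cinner_def by (simp add: algebra_simps sum.distrib)

lemma cinner_diff_left: "cinner d (\<lambda>i. u i - v i) w = cinner d u w - cinner d v w"
  unfolding cinner_def by (simp add: algebra_simps sum_subtractf)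

lemma cinner_diff_right: "cinner d w (\<lambda>i. u i - v i) = cinner d w u - cinner d w v"
  unfolding cinner_def by (simp add: algebra_simps sum_subtractf)

lemma cinner_scale_left: "cinner d (\<lambda>i. c * u i) v = c * cinner d u v"
  unfolding cinner_def by (simp add: algebra_simps sum_distrib_left)

lemma cinner_scale_right: "cinner d v (\<lambda>i. c * u i) = cnj c * cinner d v u"
  unfolding cinner_def by (simp add: algebra_simps sum_distrib_left)

lemma cinner_sum_left: "cinner d (\<lambda>i. \<Sum>t\<in>T. f t i) v = (\<Sum>t\<in>T. cinner d (f t) v)"
  unfolding cinner_def by (simp add: sum_distrib_right) (rule sum.swap)

lemma cinner_sum_right: "cinner d v (\<lambda>i. \<Sum>t\<in>T. f t i) = (\<Sum>t\<in>T. cinner d v (f t))"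
  unfolding cinner_def by (simp add: sum_distrib_left cnj_sum) (rule sum.swap)

lemma cinner_restrict_left: "cinner d (\<lambda>i. if i < d then u i else 0) v = cinner d u v"
  unfolding cinner_def by (intro sum.cong) auto

lemma cmod_sum_mult_square_le:
  "(cmod (\<Sum>i\<in>T. a i * b i))^2 \<le> (\<Sum>i\<in>T. (cmod (a i))^2) * (\<Sum>i\<in>T. (cmod (b i))^2)"
proof -
  have "cmod (\<Sum>i\<in>T. a i * b i) \<le> (\<Sum>i\<in>T. cmod (a i) * cmod (b i))"
    by (rule order_trans[OF norm_sum]) (simp add: norm_mult)
  then have "(cmod (\<Sum>i\<in>T. a i * b i))^2 \<le> (\<Sum>i\<in>T. cmod (a i) * cmod (b i))^2"
    by (rule power_mono[OF _ norm_ge_zero])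
  also have "\<dots> \<le> (\<Sum>i\<in>T. (cmod (a i))^2) * (\<Sum>i\<in>T. (cmod (b i))^2)"
    by (rule Cauchy_Schwarz_ineq_sum)
  finally show ?thesis .
qed

lemma cinner_Cauchy_Schwarz: "(cmod (cinner d u v))^2 \<le> sqnorm d u * sqnorm d v"
  using cmod_sum_mult_square_le[of u "\<lambda>i. cnj (v i)" "{..<d}"] unfolding cinner_def sqnorm_def by simp

lemma sqnorm_real_lincomb:
  "sqnorm d (\<lambda>i. \<Sum>t\<in>T. complex_of_real (c t) * w t i) =
    (\<Sum>t\<in>T. \<Sum>u\<in>T. c t * c u * Re (cinner d (w t) (w u)))"
proof -
  have "complex_of_real (sqnorm d (\<lambda>i. \<Sum>t\<in>T. complex_of_real (c t) * w t i)) =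
      (\<Sum>t\<in>T. \<Sum>u\<in>T. complex_of_real (c t * c u) * cinner d (w t) (w u))"
    unfolding cinner_self[symmetric] cinner_sum_left cinner_sum_right
      cinner_scale_left cinner_scale_right
    by (simp add: mult_ac)
  then have "sqnorm d (\<lambda>i. \<Sum>t\<in>T. complex_of_real (c t) * w t i) =
      Re (\<Sum>t\<in>T. \<Sum>u\<in>T. complex_of_real (c t * c u) * cinner d (w t) (w u))"
    by (metis Re_complex_of_real)
  then show ?thesis by (simp add: Re_sum)
qed

lemma sqnorm_lincomb_le:
  "sqnorm d (\<lambda>j. \<Sum>i\<in>T. c i * f i j) \<le> (\<Sum>i\<in>T. (cmod (c i))^2) * (\<Sum>i\<in>T. sqnorm d (f i))"
proof -
  have "sqnorm d (\<lambda>j. \<Sum>i\<in>T. c i * f i j)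
      \<le> (\<Sum>j<d. (\<Sum>i\<in>T. (cmod (c i))^2) * (\<Sum>i\<in>T. (cmod (f i j))^2))"
    unfolding sqnorm_def by (intro sum_mono cmod_sum_mult_square_le)
  also have "\<dots> = (\<Sum>i\<in>T. (cmod (c i))^2) * (\<Sum>i\<in>T. sqnorm d (f i))"
    unfolding sqnorm_def by (simp add: sum_distrib_left) (rule sum.swap)
  finally show ?thesis .
qed

lemma sqnorm_basis_fn: "i < d \<Longrightarrow> sqnorm d (basis_fn i) = 1"
  unfolding sqnorm_def basis_fn_def by (simp add: if_distrib[of "\<lambda>z. (cmod z)^2"] cong: if_cong)

lemma mat_app_diff: "mat_app d A (\<lambda>i. v i - w i) = (\<lambda>i. mat_app d A v i - mat_app d A w i)"
  unfolding mat_app_def by (simp add: fun_eq_iff algebra_simps sum_subtractf)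

lemma mat_app_lincomb:
  "mat_app d A (\<lambda>i. \<Sum>t\<in>T. c t * f t i) = (\<lambda>i. \<Sum>t\<in>T. c t * mat_app d A (f t) i)"
proof -
  have "(\<Sum>j<d. A i j * (\<Sum>t\<in>T. c t * f t j)) = (\<Sum>t\<in>T. c t * (\<Sum>j<d. A i j * f t j))" for i
    by (simp add: sum_distrib_left mult.left_commute) (rule sum.swap)
  then show ?thesis unfolding mat_app_def by auto
qed

lemma funpow_mat_app_lincomb:
  "(mat_app d A ^^ k) (\<lambda>j. \<Sum>i\<in>T. c i * f i j) = (\<lambda>j. \<Sum>i\<in>T. c i * (mat_app d A ^^ k) (f i) j)"
  by (induction k) (simp_all add: mat_app_lincomb)

lemma hermitian_on_cinner:
  assumes "hermitian_on d A"
  shows "cinner d (mat_app d A u) v = cinner d u (mat_app d A v)"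
proof -
  have "cinner d (mat_app d A u) v = (\<Sum>i<d. \<Sum>j<d. A i j * u j * cnj (v i))"
    unfolding cinner_def mat_app_def by (simp add: sum_distrib_right)
  also have "\<dots> = (\<Sum>j<d. \<Sum>i<d. A i j * u j * cnj (v i))" by (rule sum.swap)
  also have "\<dots> = (\<Sum>j<d. \<Sum>i<d. u j * cnj (A j i * v i))"
  proof (intro sum.cong refl)
    fix i j assume "j \<in> {..<d}" "i \<in> {..<d}"
    then have "A i j = cnj (A j i)" using assms unfolding hermitian_on_def by blast
    then show "A i j * u j * cnj (v i) = u j * cnj (A j i * v i)" by (simp add: mult_ac)
  qed
  also have "\<dots> = cinner d u (mat_app d A v)"
    unfolding cinner_def mat_app_def by (simp add: sum_distrib_left)
  finally show ?thesis .
qed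

lemma hermitian_on_cinner_funpow:
  assumes "hermitian_on d S"
  shows "cinner d ((mat_app d S ^^ a) u) ((mat_app d S ^^ b) v) = cinner d ((mat_app d S ^^ (a + b)) u) v"
proof (induction b arbitrary: a)
  case (Suc b)
  have "cinner d ((mat_app d S ^^ a) u) ((mat_app d S ^^ Suc b) v)
      = cinner d (mat_app d S ((mat_app d S ^^ a) u)) ((mat_app d S ^^ b) v)"
    using hermitian_on_cinner[OF assms] by simp
  also have "\<dots> = cinner d ((mat_app d S ^^ (Suc a + b)) u) v"
    using Suc.IH[of "Suc a"] by simp
  finally show ?case by simp
qed simp

text \<open>Positivity of \<open>E\<close> at \<open>v - E v\<close> together with \<open>E \<le> I\<close> gives \<open>\<parallel>E v\<parallel>\<^sup>2 \<le> Re \<langle>E v, v\<rangle>\<close>,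
  whence \<open>\<parallel>v - 2 E v\<parallel>\<^sup>2 = \<parallel>v\<parallel>\<^sup>2 - 4 Re \<langle>E v, v\<rangle> + 4 \<parallel>E v\<parallel>\<^sup>2 \<le> \<parallel>v\<parallel>\<^sup>2\<close>.\<close>

lemma contraction_on_reflection:
  assumes herm: "hermitian_on d E"
    and ge0: "\<And>v. 0 \<le> Re (cinner d (mat_app d E v) v)"
    and le1: "\<And>v. Re (cinner d (mat_app d E v) v) \<le> sqnorm d v"
    and A: "\<And>i j. i < d \<Longrightarrow> j < d \<Longrightarrow> A i j = of_bool (i = j) - 2 * E i j"
  shows "contraction_on d A"
  unfolding contraction_on_def
proof
  fix v
  define w where "w = mat_app d E v"
  define a where "a = Re (cinner d w v)"
  define q where "q = sqnorm d w"
  have Ew_v: "cinner d (mat_app d E w) v = of_real q" and v_Ew: "cinner d v (mat_app d E w) = of_real q"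
    using hermitian_on_cinner[OF herm, of w v] hermitian_on_cinner[OF herm, of v w]
    unfolding q_def cinner_self[symmetric] w_def by simp_all
  have "0 \<le> Re (cinner d (mat_app d E (\<lambda>i. v i - w i)) (\<lambda>i. v i - w i))" by (rule ge0)
  also have "\<dots> = a - 2 * q + Re (cinner d (mat_app d E w) w)"
    unfolding mat_app_diff cinner_diff_left cinner_diff_right a_def
    by (simp add: Ew_v v_Ew q_def cinner_self flip: w_def)
  also have "\<dots> \<le> a - q" using le1[of w] unfolding q_def by (simp add: cinner_self)
  finally have q_le_a: "q \<le> a" by simp
  have "mat_app d A v i = v i - 2 * w i" if "i < d" for i
  proof -
    have "mat_app d A v i = (\<Sum>j<d. of_bool (i = j) * v j - 2 * (E i j * v j))"
      using that unfolding mat_app_def by (auto simp: A algebra_simps intro: sum.cong)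
    also have "\<dots> = (\<Sum>j<d. of_bool (i = j) * v j) - 2 * w i"
      using that unfolding w_def mat_app_def by (simp add: sum_subtractf sum_distrib_left)
    also have "(\<Sum>j<d. of_bool (i = j) * v j) = (\<Sum>j<d. if i = j then v j else 0)"
      by (intro sum.cong) auto
    finally show ?thesis using that by simp
  qed
  then have "sqnorm d (mat_app d A v) = sqnorm d (\<lambda>i. v i - 2 * w i)"
    unfolding sqnorm_def by (intro sum.cong) auto
  also have "\<dots> = Re (cinner d (\<lambda>i. v i - 2 * w i) (\<lambda>i. v i - 2 * w i))"
    by (simp add: cinner_self)
  also have "\<dots> = sqnorm d v - 4 * a + 4 * q"
    unfolding cinner_diff_left cinner_diff_right cinner_scale_left cinner_scale_right a_def q_def
    by (subst cinner_commute[of d v w]) (simp add: cinner_self)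
  finally show "sqnorm d (mat_app d A v) \<le> sqnorm d v" using q_le_a by simp
qed

text \<open>Each step squares the previous bound, using \<open>\<parallel>S^a \<psi>\<parallel>\<^sup>2 = \<langle>S^(2a) \<psi>, \<psi>\<rangle>\<close>.\<close>

lemma quadratic_form_power_le_sqnorm_funpow:
  assumes herm: "hermitian_on d S" and unit: "sqnorm d psi = 1"
  shows "\<bar>Re (cinner d (mat_app d S psi) psi)\<bar> ^ (2 ^ Suc m) \<le> sqnorm d ((mat_app d S ^^ (2 ^ m)) psi)"
proof (induction m)
  case 0
  have "\<bar>Re (cinner d (mat_app d S psi) psi)\<bar> ^ 2 \<le> (cmod (cinner d (mat_app d S psi) psi)) ^ 2"
    by (rule power_mono[OF abs_Re_le_cmod abs_ge_zero])
  also have "\<dots> \<le> sqnorm d (mat_app d S psi) * sqnorm d psi" by (rule cinner_Cauchy_Schwarz)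
  finally show ?case using unit by simp
next
  case (Suc m)
  define a :: nat where "a = 2 ^ m"
  have "complex_of_real (sqnorm d ((mat_app d S ^^ a) psi)) = cinner d ((mat_app d S ^^ (a + a)) psi) psi"
    unfolding cinner_self[symmetric] hermitian_on_cinner_funpow[OF herm] ..
  then have "sqnorm d ((mat_app d S ^^ a) psi) ^ 2 \<le> (cmod (cinner d ((mat_app d S ^^ (a + a)) psi) psi)) ^ 2"
    by (metis abs_of_nonneg norm_of_real order_refl sqnorm_nonneg)
  also have "\<dots> \<le> sqnorm d ((mat_app d S ^^ (a + a)) psi)"
    using cinner_Cauchy_Schwarz unit by (metis mult.right_neutral)
  finally have step: "sqnorm d ((mat_app d S ^^ a) psi) ^ 2 \<le> sqnorm d ((mat_app d S ^^ (2 ^ Suc m)) psi)"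
    unfolding a_def by (simp add: mult_2)
  have "\<bar>Re (cinner d (mat_app d S psi) psi)\<bar> ^ (2 ^ Suc (Suc m))
      = (\<bar>Re (cinner d (mat_app d S psi) psi)\<bar> ^ (2 ^ Suc m)) ^ 2"
    by (simp add: power_mult[symmetric] mult.commute)
  also have "\<dots> \<le> sqnorm d ((mat_app d S ^^ a) psi) ^ 2"
    using Suc.IH unfolding a_def by (rule power_mono) simp
  finally show ?case using step by linarith
qed

lemma sqnorm_funpow_le_sum_basis:
  assumes supp: "\<forall>j\<ge>d. psi j = 0" and unit: "sqnorm d psi = 1"
  shows "sqnorm d ((mat_app d S ^^ k) psi) \<le> (\<Sum>i<d. sqnorm d ((mat_app d S ^^ k) (basis_fn i)))"
proof -
  have "psi = (\<lambda>j. \<Sum>i<d. psi i * basis_fn i j)"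
    using supp unfolding basis_fn_def by (auto simp: fun_eq_iff if_distrib cong: if_cong)
  then have "sqnorm d ((mat_app d S ^^ k) psi) = sqnorm d (\<lambda>j. \<Sum>i<d. psi i * (mat_app d S ^^ k) (basis_fn i) j)"
    by (metis funpow_mat_app_lincomb)
  also have "\<dots> \<le> (\<Sum>i<d. (cmod (psi i))^2) * (\<Sum>i<d. sqnorm d ((mat_app d S ^^ k) (basis_fn i)))"
    by (rule sqnorm_lincomb_le)
  finally show ?thesis using unit unfolding sqnorm_def by simp
qed

section \<open>Random signs\<close>

definition bool_sign :: "bool \<Rightarrow> real" where
  "bool_sign b = (if b then 1 else -1)"

definition words :: "nat \<Rightarrow> 'a set \<Rightarrow> 'a list set" where
  "words k X = {xs. set xs \<subseteq> X \<and> length xs = k}"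

definition word_sign :: "('a \<Rightarrow> bool) \<Rightarrow> 'a list \<Rightarrow> real" where
  "word_sign L xs = (\<Prod>x\<leftarrow>xs. bool_sign (L x))"

lemma words_0: "words 0 X = {[]}"
  unfolding words_def by auto

lemma sum_words_Suc:
  assumes "finite X"
  shows "(\<Sum>xs\<in>words (Suc k) X. f xs) = (\<Sum>x\<in>X. \<Sum>xs\<in>words k X. f (x # xs))"
proof -
  have "(\<Sum>xs\<in>words (Suc k) X. f xs) = (\<Sum>xs\<in>(\<lambda>(xs, x). x # xs) ` (words k X \<times> X). f xs)"
    unfolding words_def lists_length_Suc_eq ..
  also have "\<dots> = (\<Sum>(xs, x)\<in>words k X \<times> X. f (x # xs))"
    by (subst sum.reindex) (auto simp: inj_on_def case_prod_unfold)
  also have "\<dots> = (\<Sum>x\<in>X. \<Sum>xs\<in>words k X. f (x # xs))"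
    by (subst sum.swap) (rule sum.cartesian_product[symmetric])
  finally show ?thesis .
qed

lemma power_sum_eq_sum_words:
  fixes f :: "'a \<Rightarrow> 'b::comm_ring_1"
  assumes "finite X"
  shows "(\<Sum>x\<in>X. f x) ^ k = (\<Sum>xs\<in>words k X. \<Prod>x\<leftarrow>xs. f x)"
proof (induction k)
  case (Suc k)
  have "(\<Sum>x\<in>X. f x) ^ Suc k = (\<Sum>x\<in>X. \<Sum>xs\<in>words k X. f x * (\<Prod>y\<leftarrow>xs. f y))"
    using Suc by (simp add: sum_distrib_left sum_distrib_right) (rule sum.swap)
  also have "\<dots> = (\<Sum>xs\<in>words (Suc k) X. \<Prod>x\<leftarrow>xs. f x)"
    by (simp add: sum_words_Suc[OF assms])
  finally show ?case .
qed (simp add: words_0)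

lemma prod_list_eq_prod_count_list:
  fixes f :: "'a \<Rightarrow> 'b::comm_monoid_mult"
  assumes "finite X" "set xs \<subseteq> X"
  shows "(\<Prod>x\<leftarrow>xs. f x) = (\<Prod>x\<in>X. f x ^ count_list xs x)"
  using assms(2)
proof (induction xs)
  case (Cons y xs)
  have "(\<Prod>x\<in>X. f x ^ count_list (y # xs) x)
      = (\<Prod>x\<in>X. (if x = y then f x else 1)) * (\<Prod>x\<in>X. f x ^ count_list xs x)"
    by (subst prod.distrib[symmetric]) (auto intro: prod.cong)
  also have "(\<Prod>x\<in>X. (if x = y then f x else 1)) = f y"
    using Cons.prems assms(1) by (simp add: prod.delta')
  finally show ?case using Cons by simp
qed simp

lemma sum_PiE_bool_prod:
  fixes g :: "'a \<Rightarrow> bool \<Rightarrow> 'b::comm_semiring_1"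
  assumes "finite X"
  shows "(\<Sum>L\<in>X \<rightarrow>\<^sub>E (UNIV::bool set). \<Prod>x\<in>X. g x (L x)) = (\<Prod>x\<in>X. g x False + g x True)"
proof -
  have "(\<Prod>x\<in>X. g x False + g x True) = (\<Prod>x\<in>X. \<Sum>b\<in>UNIV. g x b)"
    by (simp add: UNIV_bool add.commute)
  also have "\<dots> = (\<Sum>L\<in>X \<rightarrow>\<^sub>E (UNIV::bool set). \<Prod>x\<in>X. g x (L x))"
    by (rule prod_sum_PiE) (use assms in auto)
  finally show ?thesis ..
qed

text \<open>Averaging over \<open>L\<close> factorizes over the letters, and a letter occurring an odd
  number of times contributes \<open>1 + (-1) = 0\<close>, an even one \<open>2\<close>.\<close>

lemma sum_word_sign_nonneg:
  assumes "finite X" "set xs \<subseteq> X"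
  shows "0 \<le> (\<Sum>L\<in>X \<rightarrow>\<^sub>E (UNIV::bool set). word_sign L xs)"
proof -
  have "(\<Sum>L\<in>X \<rightarrow>\<^sub>E (UNIV::bool set). word_sign L xs)
      = (\<Sum>L\<in>X \<rightarrow>\<^sub>E (UNIV::bool set). \<Prod>x\<in>X. bool_sign (L x) ^ count_list xs x)"
    unfolding word_sign_def by (intro sum.cong refl) (simp add: prod_list_eq_prod_count_list[OF assms])
  also have "\<dots> = (\<Prod>x\<in>X. bool_sign False ^ count_list xs x + bool_sign True ^ count_list xs x)"
    by (rule sum_PiE_bool_prod[OF assms(1)])
  also have "\<dots> \<ge> 0"
  proof (intro prod_nonneg)
    fix x
    show "0 \<le> bool_sign False ^ count_list xs x + bool_sign True ^ count_list xs x"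
      by (cases "even (count_list xs x)") (auto simp: bool_sign_def)
  qed
  finally show ?thesis .
qed

lemma sum_bool_sign_eq_0:
  assumes "finite X" "x \<in> X"
  shows "(\<Sum>L\<in>X \<rightarrow>\<^sub>E (UNIV::bool set). bool_sign (L x)) = 0"
proof -
  have "(\<Sum>L\<in>X \<rightarrow>\<^sub>E (UNIV::bool set). bool_sign (L x))
      = (\<Sum>L\<in>X \<rightarrow>\<^sub>E (UNIV::bool set). \<Prod>y\<in>X. if y = x then bool_sign (L y) else 1)"
    using assms by (intro sum.cong refl) (simp add: prod.delta')
  also have "\<dots> = (\<Prod>y\<in>X. (if y = x then bool_sign False else 1) + (if y = x then bool_sign True else 1))"
    by (rule sum_PiE_bool_prod[OF assms(1)])
  also have "\<dots> = 0"
    using assms by (intro prod_zero bexI[of _ x]) (auto simp: bool_sign_def)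
  finally show ?thesis .
qed

lemma sum_exp_bool_sign_sum:
  assumes "finite X"
  shows "(\<Sum>L\<in>X \<rightarrow>\<^sub>E (UNIV::bool set). exp (c * (\<Sum>x\<in>X. bool_sign (L x)))) = (exp c + exp (-c)) ^ card X"
proof -
  have "(\<Sum>L\<in>X \<rightarrow>\<^sub>E (UNIV::bool set). exp (c * (\<Sum>x\<in>X. bool_sign (L x))))
      = (\<Sum>L\<in>X \<rightarrow>\<^sub>E (UNIV::bool set). \<Prod>x\<in>X. exp (c * bool_sign (L x)))"
    by (intro sum.cong refl) (simp add: sum_distrib_left exp_sum[OF assms])
  also have "\<dots> = (\<Prod>x\<in>X. exp (c * bool_sign False) + exp (c * bool_sign True))"
    by (rule sum_PiE_bool_prod[OF assms])
  also have "\<dots> = (exp c + exp (-c)) ^ card X"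
    by (simp add: bool_sign_def add.commute)
  finally show ?thesis .
qed

lemma power_div_fact_le_exp:
  fixes z :: real
  assumes "0 \<le> z"
  shows "z ^ n / fact n \<le> exp z"
proof -
  have "summable (\<lambda>m. z ^ m /\<^sub>R fact m)" using exp_converges sums_summable by blast
  then have "(\<Sum>m\<in>{n}. z ^ m /\<^sub>R fact m) \<le> (\<Sum>m. z ^ m /\<^sub>R fact m)"
    by (rule sum_le_suminf) (use assms in auto)
  also have "\<dots> = exp z" using exp_converges sums_unique by metis
  finally show ?thesis by (simp add: divide_inverse mult.commute)
qed

lemma even_power_le_fact_mul_exp:
  fixes z :: real
  shows "z ^ (2*k) \<le> fact (2*k) * (exp z + exp (-z))"
proof -
  have "z ^ (2*k) = \<bar>z\<bar> ^ (2*k)" by (simp add: power_even_abs)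
  also have "\<dots> \<le> fact (2*k) * exp \<bar>z\<bar>"
    using power_div_fact_le_exp[of "\<bar>z\<bar>" "2*k"] by (simp add: divide_le_eq mult.commute)
  also have "\<dots> \<le> fact (2*k) * (exp z + exp (-z))"
    by (intro mult_left_mono) (auto simp: abs_if add_increasing add_increasing2)
  finally show ?thesis .
qed

lemma exp_plus_exp_minus_le:
  fixes t :: real
  assumes "0 \<le> t" "t \<le> 1"
  shows "exp t + exp (-t) \<le> 2 * exp (t^2)"
proof -
  define q where "q = 1 + t + t^2 / 4"
  have q_pos: "0 < q" unfolding q_def using assms by (simp add: add_pos_nonneg)
  have "q = (1 + t/2)^2" unfolding q_def by (simp add: power2_eq_square field_simps)
  also have "\<dots> \<le> (exp (t/2))^2"
    by (rule power_mono[OF exp_ge_add_one_self]) (use assms in simp)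
  finally have q_le: "q \<le> exp t" by (simp add: power2_eq_square flip: exp_add)
  have "(1 - t + t^2) * q = 1 + t^2/4 + 3*t^3/4 + t^4/4"
    unfolding q_def by (simp add: field_simps power2_eq_square power3_eq_cube power4_eq_xxxx)
  then have "1 \<le> (1 - t + t^2) * q" using assms by simp
  then have "1 / q \<le> 1 - t + t^2" using q_pos by (simp add: divide_le_eq mult.commute)
  moreover have "exp (-t) \<le> 1 / q"
    using q_pos q_le by (simp add: exp_minus inverse_eq_divide frac_le)
  ultimately have "exp (-t) \<le> 1 - t + t^2" by linarith
  moreover have "exp t \<le> 1 + t + t^2" using exp_bound assms by blast
  moreover have "1 + t^2 \<le> exp (t^2)" by (rule exp_ge_add_one_self)
  ultimately show ?thesis by linarith
qed

text \<open>Exponential moments with \<open>t = \<surd>(k/N)\<close>: \<open>(t y)^(2k) \<le> (2k)! (e^(t y) + e^(-t y))\<close>,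
  and \<open>\<Sum>\<^sub>L e^(t y\<^sub>L) = (e^t + e^(-t))^N \<le> 2^N e^k\<close>.\<close>

lemma sum_bool_sign_sum_power_le:
  assumes fin: "finite X" and k1: "1 \<le> k" and kN: "k \<le> card X"
  shows "(\<Sum>L\<in>X \<rightarrow>\<^sub>E (UNIV::bool set). (\<Sum>x\<in>X. bool_sign (L x)) ^ (2*k))
     \<le> 2 * 2 ^ card X * (12 * real k * real (card X)) ^ k"
proof -
  define N where "N = card X"
  define F where "F = X \<rightarrow>\<^sub>E (UNIV::bool set)"
  define y where "y = (\<lambda>L. \<Sum>x\<in>X. bool_sign (L x))"
  define t where "t = sqrt (real k / real N)"
  have N_pos: "0 < real N" and k_pos: "0 < real k" using k1 kN unfolding N_def by simp_all
  have t_nonneg: "0 \<le> t" and t_le1: "t \<le> 1" and t_sq: "t^2 = real k / real N"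
    unfolding t_def using kN N_pos unfolding N_def by (simp_all add: real_sqrt_le_1_iff)
  have "t ^ (2*k) * (\<Sum>L\<in>F. y L ^ (2*k)) = (\<Sum>L\<in>F. (t * y L) ^ (2*k))"
    by (simp add: sum_distrib_left power_mult_distrib)
  also have "\<dots> \<le> (\<Sum>L\<in>F. fact (2*k) * (exp (t * y L) + exp (-(t * y L))))"
    by (intro sum_mono even_power_le_fact_mul_exp)
  also have "\<dots> = fact (2*k) * ((\<Sum>L\<in>F. exp (t * y L)) + (\<Sum>L\<in>F. exp ((-t) * y L)))"
    by (simp add: sum.distrib distrib_left sum_distrib_left)
  also have "\<dots> = fact (2*k) * (2 * (exp t + exp (-t)) ^ N)"
    unfolding F_def y_def sum_exp_bool_sign_sum[OF fin] N_def by (simp add: add.commute)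
  also have "\<dots> \<le> fact (2*k) * (2 * (2 * exp (t^2)) ^ N)"
    using exp_plus_exp_minus_le[OF t_nonneg t_le1] by (intro mult_left_mono power_mono) auto
  also have "(2 * exp (t^2)) ^ N = 2 ^ N * exp 1 ^ k"
    using N_pos by (simp add: power_mult_distrib t_sq flip: exp_of_nat_mult)
  also have "fact (2*k) * (2 * (2 ^ N * exp 1 ^ k)) \<le> real ((2*k) ^ (2*k)) * (2 * (2 ^ N * 3 ^ k))"
    by (intro mult_mono fact_le_power mult_left_mono power_mono exp_le) auto
  finally have bound: "t ^ (2*k) * (\<Sum>L\<in>F. y L ^ (2*k)) \<le> real ((2*k) ^ (2*k)) * (2 * (2 ^ N * 3 ^ k))" .
  have t_pow: "t ^ (2*k) = (real k / real N) ^ k" by (simp add: power_mult t_sq)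
  have "(\<Sum>L\<in>F. y L ^ (2*k)) \<le> real ((2*k) ^ (2*k)) * (2 * (2 ^ N * 3 ^ k)) / (real k / real N) ^ k"
    using bound k_pos N_pos unfolding t_pow by (simp add: le_divide_eq mult.commute)
  also have "\<dots> = 2 * 2 ^ N * ((4 * real k ^ 2) * 3 / (real k / real N)) ^ k"
    using k1 by (simp add: power_mult power_mult_distrib power_divide power2_eq_square
      flip: power_mult_distrib[of "4::real" 3])
  also have "(4 * real k ^ 2) * 3 / (real k / real N) = 12 * real k * real N"
    using k_pos N_pos by (simp add: field_simps power2_eq_square)
  finally show ?thesis unfolding F_def y_def N_def .
qed

section \<open>The moment bound\<close>

definition signed_sum :: "'a set \<Rightarrow> ('a \<Rightarrow> nat \<Rightarrow> nat \<Rightarrow> complex) \<Rightarrow> ('a \<Rightarrow> bool) \<Rightarrow> nat \<Rightarrow> nat \<Rightarrow> complex" where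
  "signed_sum X A L = (\<lambda>i j. \<Sum>x\<in>X. complex_of_real (bool_sign (L x)) * A x i j)"

fun word_app :: "nat \<Rightarrow> ('a \<Rightarrow> nat \<Rightarrow> nat \<Rightarrow> complex) \<Rightarrow> 'a list \<Rightarrow> (nat \<Rightarrow> complex) \<Rightarrow> nat \<Rightarrow> complex" where
  "word_app d A [] v = v"
| "word_app d A (x # xs) v = mat_app d (A x) (word_app d A xs v)"

lemma hermitian_on_signed_sum:
  assumes "\<forall>x\<in>X. hermitian_on d (A x)"
  shows "hermitian_on d (signed_sum X A L)"
  unfolding hermitian_on_def
proof (intro allI impI)
  fix i j assume "i < d" "j < d"
  then have "\<And>x. x \<in> X \<Longrightarrow> A x i j = cnj (A x j i)" using assms unfolding hermitian_on_def by blast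
  then show "signed_sum X A L i j = cnj (signed_sum X A L j i)"
    unfolding signed_sum_def cnj_sum by (intro sum.cong refl) simp
qed

lemma mat_app_signed_sum:
  "mat_app d (signed_sum X A L) v = (\<lambda>i. \<Sum>x\<in>X. complex_of_real (bool_sign (L x)) * mat_app d (A x) v i)"
proof -
  have "(\<Sum>j<d. (\<Sum>x\<in>X. c x * A x i j) * v j) = (\<Sum>x\<in>X. c x * (\<Sum>j<d. A x i j * v j))"
    for i and c :: "'a \<Rightarrow> complex"
    by (simp add: sum_distrib_left sum_distrib_right mult.assoc) (rule sum.swap)
  then show ?thesis unfolding mat_app_def signed_sum_def by auto
qed

lemma Re_cinner_signed_sum:
  "Re (cinner d (mat_app d (signed_sum X A L) w) w) = (\<Sum>x\<in>X. bool_sign (L x) * Re (cinner d (mat_app d (A x) w) w))"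
  unfolding mat_app_signed_sum cinner_sum_left cinner_scale_left by (simp add: Re_sum)

lemma funpow_signed_sum_eq_sum_words:
  assumes "finite X"
  shows "(mat_app d (signed_sum X A L) ^^ k) v
    = (\<lambda>i. \<Sum>xs\<in>words k X. complex_of_real (word_sign L xs) * word_app d A xs v i)"
proof (induction k)
  case (Suc k)
  have "(mat_app d (signed_sum X A L) ^^ Suc k) v i
      = (\<Sum>x\<in>X. \<Sum>xs\<in>words k X. complex_of_real (bool_sign (L x) * word_sign L xs) * word_app d A (x # xs) v i)"
    for i by (simp add: Suc mat_app_signed_sum mat_app_lincomb sum_distrib_left mult_ac) (rule sum.swap)
  then have "(mat_app d (signed_sum X A L) ^^ Suc k) v
      = (\<lambda>i. \<Sum>x\<in>X. \<Sum>xs\<in>words k X. complex_of_real (bool_sign (L x) * word_sign L xs) * word_app d A (x # xs) v i)"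
    by auto
  also have "\<dots> = (\<lambda>i. \<Sum>xs\<in>words (Suc k) X. complex_of_real (word_sign L xs) * word_app d A xs v i)"
    by (simp add: sum_words_Suc[OF assms] word_sign_def)
  finally show ?case .
qed (simp add: words_0 word_sign_def)

lemma sqnorm_word_app_le:
  assumes "\<forall>x\<in>X. contraction_on d (A x)" "set xs \<subseteq> X"
  shows "sqnorm d (word_app d A xs v) \<le> sqnorm d v"
  using assms(2)
proof (induction xs)
  case (Cons x xs)
  then have "sqnorm d (word_app d A (x # xs) v) \<le> sqnorm d (word_app d A xs v)"
    using assms(1) unfolding contraction_on_def by simp
  then show ?case using Cons by simp
qed simp

lemma sum_swap_outer:
  "(\<Sum>L\<in>F. \<Sum>x\<in>W. \<Sum>y\<in>W. f L x y) = (\<Sum>x\<in>W. \<Sum>y\<in>W. \<Sum>L\<in>F. f L x y)"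
  by (subst sum.swap) (intro sum.cong refl sum.swap)

lemma Re_cinner_le_1:
  assumes "sqnorm d u \<le> 1" "sqnorm d v \<le> 1"
  shows "Re (cinner d u v) \<le> 1"
proof -
  have "(cmod (cinner d u v))^2 \<le> 1"
    using cinner_Cauchy_Schwarz[of d u v] mult_le_one[OF assms(1) sqnorm_nonneg assms(2)] by linarith
  then have "cmod (cinner d u v) \<le> 1" by (simp add: power_le_one_iff)
  then show ?thesis using complex_Re_le_cmod order_trans by blast
qed

text \<open>A noncommutative Khintchine-type bound: expand \<open>\<parallel>S\<^sub>L^k u\<parallel>\<^sup>2\<close> over pairs of words; the sign
  averages are nonnegative and the inner products of words applied to \<open>u\<close> are at most one.\<close>

lemma sum_sqnorm_funpow_signed_sum_le:
  assumes fin: "finite X" and contr: "\<forall>x\<in>X. contraction_on d (A x)" and u: "sqnorm d u \<le> 1"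
  shows "(\<Sum>L\<in>X \<rightarrow>\<^sub>E (UNIV::bool set). sqnorm d ((mat_app d (signed_sum X A L) ^^ k) u))
     \<le> (\<Sum>L\<in>X \<rightarrow>\<^sub>E (UNIV::bool set). (\<Sum>x\<in>X. bool_sign (L x)) ^ (2*k))"
proof -
  define F where "F = X \<rightarrow>\<^sub>E (UNIV::bool set)"
  define W where "W = words k X"
  define c where "c = (\<lambda>xs ys. \<Sum>L\<in>F. word_sign L xs * word_sign L ys)"
  define R where "R = (\<lambda>xs ys. Re (cinner d (word_app d A xs u) (word_app d A ys u)))"
  have R_le: "R xs ys \<le> 1" if "xs \<in> W" "ys \<in> W" for xs ys
    using that u unfolding R_def W_def words_def
    by (intro Re_cinner_le_1 order_trans[OF sqnorm_word_app_le[OF contr]]) auto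
  have c_nonneg: "0 \<le> c xs ys" if "xs \<in> W" "ys \<in> W" for xs ys
    using sum_word_sign_nonneg[OF fin, of "xs @ ys"] that
    unfolding c_def F_def W_def words_def word_sign_def by simp
  have "(\<Sum>L\<in>F. sqnorm d ((mat_app d (signed_sum X A L) ^^ k) u))
      = (\<Sum>L\<in>F. \<Sum>xs\<in>W. \<Sum>ys\<in>W. word_sign L xs * word_sign L ys * R xs ys)"
    unfolding funpow_signed_sum_eq_sum_words[OF fin] sqnorm_real_lincomb W_def R_def ..
  also have "\<dots> = (\<Sum>xs\<in>W. \<Sum>ys\<in>W. c xs ys * R xs ys)"
    unfolding sum_swap_outer c_def by (simp add: sum_distrib_right)
  also have "\<dots> \<le> (\<Sum>xs\<in>W. \<Sum>ys\<in>W. c xs ys)"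
    by (intro sum_mono mult_left_le R_le c_nonneg)
  also have "\<dots> = (\<Sum>L\<in>F. (\<Sum>xs\<in>W. word_sign L xs) ^ 2)"
    unfolding c_def sum_swap_outer[symmetric] by (simp add: power2_eq_square sum_product)
  also have "\<dots> = (\<Sum>L\<in>F. (\<Sum>x\<in>X. bool_sign (L x)) ^ (2*k))"
    unfolding W_def word_sign_def power_sum_eq_sum_words[OF fin, symmetric]
    by (simp add: power_mult mult.commute)
  finally show ?thesis unfolding F_def .
qed

lemma sum_le_of_sum_power_le:
  fixes x :: "'b \<Rightarrow> real"
  assumes fin: "finite F" and n: "1 \<le> n" and T: "0 < T" and x_nonneg: "\<And>L. L \<in> F \<Longrightarrow> 0 \<le> x L"
    and power_sum: "(\<Sum>L\<in>F. x L ^ n) \<le> real (card F) * T ^ n"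
  shows "(\<Sum>L\<in>F. x L) \<le> real (card F) * T"
proof -
  have tangent: "x L \<le> T + T / real n * ((x L / T) ^ n - 1)" if "L \<in> F" for L
  proof -
    have "1 + real n * (x L / T - 1) \<le> (x L / T) ^ n"
      using Bernoulli_inequality[of "x L / T - 1" n] x_nonneg[OF that] T by simp
    then show ?thesis using n T by (simp add: field_simps)
  qed
  have "(\<Sum>L\<in>F. x L) \<le> (\<Sum>L\<in>F. T + T / real n * ((x L / T) ^ n - 1))"
    by (rule sum_mono[OF tangent])
  also have "\<dots> = real (card F) * T + T / real n * (\<Sum>L\<in>F. (x L / T) ^ n - 1)"
    by (simp add: sum.distrib sum_distrib_left)
  also have "\<dots> = real (card F) * T + T / real n * ((\<Sum>L\<in>F. x L ^ n) / T ^ n - real (card F))"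
    by (simp add: sum_subtractf power_divide sum_divide_distrib)
  also have "\<dots> \<le> real (card F) * T"
    using power_sum T n by (simp add: mult_nonneg_nonpos divide_le_eq)
  finally show ?thesis .
qed

lemma moment_constant_le:
  assumes "1 \<le> k" "p \<le> k" "k \<le> 2 * p"
  shows "(2::real) ^ p * (2 * (12 * real k * real N) ^ k) \<le> (100 * real p * real N) ^ k"
proof -
  have "(2::real) * 2 ^ k = 2 ^ Suc k" by simp
  also have "\<dots> \<le> 2 ^ (2 * k)" by (rule power_increasing) (use assms(1) in auto)
  also have "\<dots> = 4 ^ k" by (simp add: power_mult)
  finally have four: "(2::real) * 2 ^ k \<le> 4 ^ k" .
  have "(2::real) ^ p * (2 * (12 * real k * real N) ^ k) \<le> 2 ^ k * (2 * (12 * real k * real N) ^ k)"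
    using assms(2) by (intro mult_right_mono power_increasing) auto
  also have "\<dots> = (2 * 2 ^ k) * (12 * real k * real N) ^ k" by (simp only: ac_simps)
  also have "\<dots> \<le> 4 ^ k * (24 * real p * real N) ^ k"
  proof -
    have "12 * real k * real N \<le> 24 * real p * real N"
      using assms(3) by (intro mult_right_mono) auto
    then show ?thesis by (intro mult_mono[OF four] power_mono) auto
  qed
  also have "\<dots> = (4 * (24 * real p * real N)) ^ k" by (rule power_mult_distrib[symmetric])
  also have "\<dots> \<le> (100 * real p * real N) ^ k" by (rule power_mono) auto
  finally show ?thesis .
qed

lemma sum_quadratic_form_power_le:
  fixes A :: "'a \<Rightarrow> nat \<Rightarrow> nat \<Rightarrow> complex" and psi :: "('a \<Rightarrow> bool) \<Rightarrow> nat \<Rightarrow> complex"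
  assumes fin: "finite X"
    and herm: "\<forall>x\<in>X. hermitian_on d (A x)" and contr: "\<forall>x\<in>X. contraction_on d (A x)"
    and states: "\<forall>L\<in>X \<rightarrow>\<^sub>E (UNIV::bool set). sqnorm d (psi L) = 1 \<and> (\<forall>j\<ge>d. psi L j = 0)"
  shows "(\<Sum>L\<in>X \<rightarrow>\<^sub>E (UNIV::bool set).
      \<bar>Re (cinner d (mat_app d (signed_sum X A L) (psi L)) (psi L))\<bar> ^ (2 * 2 ^ m))
    \<le> real d * (\<Sum>L\<in>X \<rightarrow>\<^sub>E (UNIV::bool set). (\<Sum>x\<in>X. bool_sign (L x)) ^ (2 * 2 ^ m))"
proof -
  define F where "F = X \<rightarrow>\<^sub>E (UNIV::bool set)"
  define S where "S = signed_sum X A"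
  have "\<bar>Re (cinner d (mat_app d (S L) (psi L)) (psi L))\<bar> ^ (2 * 2 ^ m)
      \<le> (\<Sum>i<d. sqnorm d ((mat_app d (S L) ^^ 2 ^ m) (basis_fn i)))" if "L \<in> F" for L
  proof -
    have unit: "sqnorm d (psi L) = 1" and supp: "\<forall>j\<ge>d. psi L j = 0"
      using states that unfolding F_def by auto
    have "\<bar>Re (cinner d (mat_app d (S L) (psi L)) (psi L))\<bar> ^ (2 * 2 ^ m)
        \<le> sqnorm d ((mat_app d (S L) ^^ 2 ^ m) (psi L))"
      using quadratic_form_power_le_sqnorm_funpow[OF hermitian_on_signed_sum[OF herm] unit]
      unfolding S_def by simp
    also have "\<dots> \<le> (\<Sum>i<d. sqnorm d ((mat_app d (S L) ^^ 2 ^ m) (basis_fn i)))"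
      by (rule sqnorm_funpow_le_sum_basis[OF supp unit])
    finally show ?thesis .
  qed
  then have "(\<Sum>L\<in>F. \<bar>Re (cinner d (mat_app d (S L) (psi L)) (psi L))\<bar> ^ (2 * 2 ^ m))
      \<le> (\<Sum>i<d. \<Sum>L\<in>F. sqnorm d ((mat_app d (S L) ^^ 2 ^ m) (basis_fn i)))"
    by (subst sum.swap) (rule sum_mono)
  also have "\<dots> \<le> (\<Sum>i<d. \<Sum>L\<in>F. (\<Sum>x\<in>X. bool_sign (L x)) ^ (2 * 2 ^ m))"
    using contr unfolding F_def S_def
    by (intro sum_mono sum_sqnorm_funpow_signed_sum_le[OF fin]) (simp_all add: sqnorm_basis_fn)
  finally show ?thesis unfolding F_def S_def by simp
qed

theorem sum_quadratic_form_signed_sum_le: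
  fixes A :: "'a \<Rightarrow> nat \<Rightarrow> nat \<Rightarrow> complex" and psi :: "('a \<Rightarrow> bool) \<Rightarrow> nat \<Rightarrow> complex"
  assumes fin: "finite X" and p: "1 \<le> p" "2 * p \<le> card X"
    and herm: "\<forall>x\<in>X. hermitian_on (2 ^ p) (A x)" and contr: "\<forall>x\<in>X. contraction_on (2 ^ p) (A x)"
    and states: "\<forall>L\<in>X \<rightarrow>\<^sub>E (UNIV::bool set). sqnorm (2 ^ p) (psi L) = 1 \<and> (\<forall>j\<ge>2 ^ p. psi L j = 0)"
  shows "(\<Sum>L\<in>X \<rightarrow>\<^sub>E (UNIV::bool set). Re (cinner (2 ^ p) (mat_app (2 ^ p) (signed_sum X A L) (psi L)) (psi L)))
    \<le> 2 ^ card X * (10 * sqrt (real p * real (card X)))"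
proof -
  define N where "N = card X"
  define F where "F = X \<rightarrow>\<^sub>E (UNIV::bool set)"
  define lam where "lam = (\<lambda>L. Re (cinner (2 ^ p) (mat_app (2 ^ p) (signed_sum X A L) (psi L)) (psi L)))"
  define T where "T = 10 * sqrt (real p * real N)"
  obtain m where m: "2 ^ m \<le> p" "p < 2 ^ Suc m" using ex_power_ivl1[of 2 p] p by auto
  define k :: nat where "k = 2 ^ Suc m"
  have k: "1 \<le> k" "p \<le> k" "k \<le> 2 * p" "k \<le> N" using m p unfolding k_def N_def by auto
  have finite_F: "finite F" and card_F: "card F = 2 ^ N"
    using fin unfolding F_def N_def by (simp_all add: finite_PiE card_PiE)
  have T_pos: "0 < T" using p unfolding T_def N_def by simp
  have "(\<Sum>L\<in>F. \<bar>lam L\<bar> ^ (2 * k)) \<le> 2 ^ p * (\<Sum>L\<in>F. (\<Sum>x\<in>X. bool_sign (L x)) ^ (2 * k))"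
    using sum_quadratic_form_power_le[OF fin herm contr states, of "Suc m"]
    unfolding F_def lam_def k_def by simp
  also have "\<dots> \<le> 2 ^ p * (2 * 2 ^ N * (12 * real k * real N) ^ k)"
    using sum_bool_sign_sum_power_le[OF fin k(1)] k(4) unfolding F_def N_def
    by (intro mult_left_mono) simp_all
  also have "\<dots> = 2 ^ N * (2 ^ p * (2 * (12 * real k * real N) ^ k))" by simp
  also have "\<dots> \<le> 2 ^ N * (100 * real p * real N) ^ k"
    using moment_constant_le[OF k(1-3)] by (rule mult_left_mono) simp
  also have "\<dots> = real (card F) * T ^ (2 * k)"
  proof -
    have "T ^ 2 = 100 * real p * real N" unfolding T_def by (simp add: power_mult_distrib)
    then show ?thesis using card_F by (simp add: power_mult)
  qed
  finally have "(\<Sum>L\<in>F. \<bar>lam L\<bar> ^ (2 * k)) \<le> real (card F) * T ^ (2 * k)" .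
  then have "(\<Sum>L\<in>F. \<bar>lam L\<bar>) \<le> real (card F) * T"
    using k(1) by (intro sum_le_of_sum_power_le[OF finite_F _ T_pos]) auto
  moreover have "(\<Sum>L\<in>F. lam L) \<le> (\<Sum>L\<in>F. \<bar>lam L\<bar>)" by (intro sum_mono) simp
  ultimately show ?thesis unfolding lam_def card_F unfolding F_def T_def N_def by simp
qed

section \<open>Two-outcome measurements\<close>

definition vec_fn :: "complex vec \<Rightarrow> nat \<Rightarrow> complex" where
  "vec_fn v = (\<lambda>i. if i < dim_vec v then v $ i else 0)"

definition mat_fn :: "complex mat \<Rightarrow> nat \<Rightarrow> nat \<Rightarrow> complex" where
  "mat_fn E = (\<lambda>i j. E $$ (i, j))"

definition observable :: "complex mat \<Rightarrow> complex mat \<Rightarrow> nat \<Rightarrow> nat \<Rightarrow> complex" where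
  "observable E0 E1 = (\<lambda>i j. E1 $$ (i, j) - E0 $$ (i, j))"

lemma psd_matD:
  assumes "psd_mat d E"
  shows "E \<in> carrier_mat d d" "hermitian_mat E" "v \<in> carrier_vec d \<Longrightarrow> 0 \<le> Re ((E *\<^sub>v v) \<bullet>c v)"
proof -
  have "E \<in> carrier_mat d d \<and> hermitian_mat E \<and> (\<forall>v\<in>carrier_vec d. 0 \<le> Re ((E *\<^sub>v v) \<bullet>c v))"
    using assms unfolding psd_mat_def .
  then show "E \<in> carrier_mat d d" "hermitian_mat E" "v \<in> carrier_vec d \<Longrightarrow> 0 \<le> Re ((E *\<^sub>v v) \<bullet>c v)"
    by auto
qed

lemma cscalar_prod_mult_mat_vec_eq_cinner:
  assumes E: "E \<in> carrier_mat d d" and v: "v \<in> carrier_vec d"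
  shows "(E *\<^sub>v v) \<bullet>c v = cinner d (mat_app d (mat_fn E) (vec_fn v)) (vec_fn v)"
proof -
  have "(E *\<^sub>v v) $ i = (\<Sum>j<d. E $$ (i, j) * vec_fn v j)" if "i < d" for i
  proof -
    have "(E *\<^sub>v v) $ i = row E i \<bullet> v" using that E by simp
    also have "\<dots> = (\<Sum>j\<in>{0..<d}. row E i $ j * v $ j)"
      using v unfolding scalar_prod_def by simp
    also have "\<dots> = (\<Sum>j<d. E $$ (i, j) * vec_fn v j)"
      using that E v unfolding vec_fn_def by (intro sum.cong) (auto simp: atLeast0LessThan)
    finally show ?thesis .
  qed
  then show ?thesis
    using v unfolding scalar_prod_def cinner_def mat_app_def mat_fn_def vec_fn_def
    by (auto simp: atLeast0LessThan intro: sum.cong)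
qed

lemma outcome_prob_eq_cinner:
  "E \<in> carrier_mat d d \<Longrightarrow> v \<in> carrier_vec d \<Longrightarrow>
    outcome_prob E v = Re (cinner d (mat_app d (mat_fn E) (vec_fn v)) (vec_fn v))"
  unfolding outcome_prob_def by (simp add: cscalar_prod_mult_mat_vec_eq_cinner)

lemma psd_mat_cinner_nonneg:
  assumes "psd_mat d E"
  shows "0 \<le> Re (cinner d (mat_app d (mat_fn E) w) w)"
proof -
  have "vec d w \<in> carrier_vec d" by simp
  then have "0 \<le> Re ((E *\<^sub>v vec d w) \<bullet>c vec d w)" by (rule psd_matD(3)[OF assms])
  also have "(E *\<^sub>v vec d w) \<bullet>c vec d w
      = cinner d (mat_app d (mat_fn E) (vec_fn (vec d w))) (vec_fn (vec d w))"
    using psd_matD(1)[OF assms] by (simp add: cscalar_prod_mult_mat_vec_eq_cinner)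
  also have "\<dots> = cinner d (mat_app d (mat_fn E) w) w"
    unfolding cinner_def mat_app_def vec_fn_def by (auto intro!: sum.cong)
  finally show ?thesis .
qed

lemma outcome_prob_nonneg:
  assumes "psd_mat d E" "v \<in> carrier_vec d"
  shows "0 \<le> outcome_prob E v"
  using outcome_prob_eq_cinner[OF psd_matD(1)[OF assms(1)] assms(2)] psd_mat_cinner_nonneg[OF assms(1)]
  by simp

lemma hermitian_on_mat_fn:
  assumes "hermitian_mat E" "E \<in> carrier_mat d d"
  shows "hermitian_on d (mat_fn E)"
  unfolding hermitian_on_def mat_fn_def
proof (intro allI impI)
  fix i j assume "i < d" "j < d"
  then have "i < dim_row E" "j < dim_col E" using assms(2) by auto
  then show "E $$ (i, j) = cnj (E $$ (j, i))" using assms(1) unfolding hermitian_mat_def by blast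
qed

lemma hermitian_on_psd_mat: "psd_mat d E \<Longrightarrow> hermitian_on d (mat_fn E)"
  by (rule hermitian_on_mat_fn[OF psd_matD(2,1)])

lemma sqnorm_vec_fn:
  assumes "v \<in> carrier_vec d"
  shows "complex_of_real (sqnorm d (vec_fn v)) = v \<bullet>c v"
proof -
  have "complex_of_real (sqnorm d (vec_fn v)) = (\<Sum>i<d. vec_fn v i * cnj (vec_fn v i))"
    unfolding cinner_def[symmetric] by (simp add: cinner_self)
  also have "\<dots> = (\<Sum>i\<in>{0..<d}. v $ i * conjugate v $ i)"
    using assms unfolding vec_fn_def atLeast0LessThan by (intro sum.cong refl) auto
  also have "\<dots> = v \<bullet>c v"
    using assms unfolding scalar_prod_def by simp
  finally show ?thesis .
qed

lemma sqnorm_vec_fn_pure_state: "pure_state m v \<Longrightarrow> sqnorm (qdim m) (vec_fn v) = 1"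
  using sqnorm_vec_fn[of v "qdim m"] unfolding pure_state_def by simp

context
  fixes d :: nat and E0 E1 :: "complex mat"
  assumes povm: "binary_povm d E0 E1"
begin

lemma binary_povm_entries:
  assumes "i < d" "j < d"
  shows "E0 $$ (i, j) + E1 $$ (i, j) = of_bool (i = j)"
proof -
  have E1: "E1 \<in> carrier_mat d d" and sum: "E0 + E1 = 1\<^sub>m d"
    using povm unfolding binary_povm_def psd_mat_def by auto
  have "E0 $$ (i, j) + E1 $$ (i, j) = (E0 + E1) $$ (i, j)" using assms E1 by simp
  also have "\<dots> = of_bool (i = j)" using sum assms by simp
  finally show ?thesis .
qed

lemma Re_cinner_binary_povm_sum:
  "Re (cinner d (mat_app d (mat_fn E0) w) w) + Re (cinner d (mat_app d (mat_fn E1) w) w) = sqnorm d w"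
proof -
  have "mat_app d (mat_fn E0) w i + mat_app d (mat_fn E1) w i = (if i < d then w i else 0)" for i
  proof -
    have "(\<Sum>j<d. E0 $$ (i, j) * w j) + (\<Sum>j<d. E1 $$ (i, j) * w j) = w i" if "i < d"
    proof -
      have "(\<Sum>j<d. E0 $$ (i, j) * w j) + (\<Sum>j<d. E1 $$ (i, j) * w j)
          = (\<Sum>j<d. (E0 $$ (i, j) + E1 $$ (i, j)) * w j)"
        by (simp add: sum.distrib distrib_right)
      also have "\<dots> = (\<Sum>j<d. if i = j then w j else 0)"
        using that by (intro sum.cong) (auto simp: binary_povm_entries)
      finally show ?thesis using that by simp
    qed
    then show ?thesis unfolding mat_app_def mat_fn_def by auto
  qed
  then have "cinner d (mat_app d (mat_fn E0) w) w + cinner d (mat_app d (mat_fn E1) w) w = cinner d w w"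
    by (simp add: cinner_add_left[symmetric] cinner_restrict_left)
  then show ?thesis by (metis cinner_self Re_complex_of_real plus_complex.simps(1))
qed

lemma psd_mat_povm: "psd_mat d E0" "psd_mat d E1"
  using povm unfolding binary_povm_def by simp_all

lemma hermitian_on_observable: "hermitian_on d (observable E0 E1)"
proof -
  have "hermitian_on d (mat_fn E0)" "hermitian_on d (mat_fn E1)"
    by (rule hermitian_on_psd_mat[OF psd_mat_povm(1)], rule hermitian_on_psd_mat[OF psd_mat_povm(2)])
  then show ?thesis
    unfolding hermitian_on_def observable_def mat_fn_def by (metis complex_cnj_diff)
qed

lemma mat_app_observable:
  "mat_app d (observable E0 E1) v = (\<lambda>i. mat_app d (mat_fn E1) v i - mat_app d (mat_fn E0) v i)"
  unfolding mat_app_def observable_def mat_fn_def by (auto simp: fun_eq_iff algebra_simps sum_subtractf)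

lemma contraction_on_observable: "contraction_on d (observable E0 E1)"
proof (rule contraction_on_reflection)
  show "hermitian_on d (mat_fn E0)"
    using psd_mat_povm(1) by (rule hermitian_on_psd_mat)
  show "0 \<le> Re (cinner d (mat_app d (mat_fn E0) v) v)" for v
    by (rule psd_mat_cinner_nonneg[OF psd_mat_povm(1)])
  show "Re (cinner d (mat_app d (mat_fn E0) v) v) \<le> sqnorm d v" for v
    using Re_cinner_binary_povm_sum[of v] psd_mat_cinner_nonneg[OF psd_mat_povm(2), of v] by linarith
  show "observable E0 E1 i j = of_bool (i = j) - 2 * mat_fn E0 i j" if "i < d" "j < d" for i j
    using binary_povm_entries[OF that] unfolding observable_def mat_fn_def by (simp add: algebra_simps)
qed

lemma outcome_prob_binary_povm:
  assumes v: "v \<in> carrier_vec d" "v \<bullet>c v = 1"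
  shows "outcome_prob (if b then E1 else E0) v
    = 1/2 + bool_sign b / 2 * Re (cinner d (mat_app d (observable E0 E1) (vec_fn v)) (vec_fn v))"
proof -
  define q where "q = (\<lambda>E. Re (cinner d (mat_app d (mat_fn E) (vec_fn v)) (vec_fn v)))"
  have "sqnorm d (vec_fn v) = 1"
    using sqnorm_vec_fn[OF v(1)] v(2) by simp
  then have "q E0 + q E1 = 1" unfolding q_def by (simp add: Re_cinner_binary_povm_sum)
  moreover have "Re (cinner d (mat_app d (observable E0 E1) (vec_fn v)) (vec_fn v)) = q E1 - q E0"
    unfolding q_def mat_app_observable cinner_diff_left by simp
  moreover have "outcome_prob E0 v = q E0" "outcome_prob E1 v = q E1"
    unfolding q_def using v(1) psd_matD(1)[OF psd_mat_povm(1)] psd_matD(1)[OF psd_mat_povm(2)]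
    by (simp_all add: outcome_prob_eq_cinner)
  ultimately show ?thesis by (cases b) (simp_all add: bool_sign_def field_simps)
qed

lemma outcome_prob_le_1:
  assumes v: "v \<in> carrier_vec d" "v \<bullet>c v = 1"
  shows "outcome_prob (if b then E1 else E0) v \<le> 1"
proof -
  have "0 \<le> outcome_prob (if \<not> b then E1 else E0) v"
    using outcome_prob_nonneg[OF psd_mat_povm(1) v(1)] outcome_prob_nonneg[OF psd_mat_povm(2) v(1)] by simp
  then show ?thesis
    using outcome_prob_binary_povm[OF v, of b] outcome_prob_binary_povm[OF v, of "\<not> b"]
    by (simp add: bool_sign_def split: if_splits)
qed

end

section \<open>The success probability\<close>

definition bias ::
  "nat \<Rightarrow> nat \<Rightarrow> ((bool list \<Rightarrow> bool) \<Rightarrow> complex vec) \<Rightarrow> (bool list \<Rightarrow> bool \<Rightarrow> complex mat) \<Rightarrow> real" where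
  "bias d n psi M = (\<Sum>L\<in>boolfuns n.
     Re (cinner d (mat_app d (signed_sum (bitstrings n) (\<lambda>x. observable (M x False) (M x True)) L)
       (vec_fn (psi L))) (vec_fn (psi L))))"

lemma finite_bitstrings: "finite (bitstrings n)"
  unfolding bitstrings_def using finite_lists_length_eq[of "UNIV :: bool set" n] by simp

lemma card_bitstrings: "card (bitstrings n) = 2 ^ n"
  unfolding bitstrings_def using card_lists_length_eq[of "UNIV :: bool set" n] by simp

lemma card_boolfuns: "card (boolfuns n) = 2 ^ 2 ^ n"
  unfolding boolfuns_def by (simp add: card_PiE finite_bitstrings card_bitstrings)

context
  fixes m n :: nat and psi :: "(bool list \<Rightarrow> bool) \<Rightarrow> complex vec"
    and M :: "bool list \<Rightarrow> bool \<Rightarrow> complex mat"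
  assumes states: "\<forall>L \<in> boolfuns n. pure_state m (psi L)"
    and povms: "\<forall>x \<in> bitstrings n. binary_povm (qdim m) (M x False) (M x True)"
begin

lemma outcome_prob_answer:
  assumes "x \<in> bitstrings n" "L \<in> boolfuns n"
  shows "outcome_prob (M x (L x)) (psi L) = 1/2 + bool_sign (L x) / 2 *
    Re (cinner (qdim m) (mat_app (qdim m) (observable (M x False) (M x True)) (vec_fn (psi L))) (vec_fn (psi L)))"
  using outcome_prob_binary_povm[of "qdim m" "M x False" "M x True" "psi L" "L x"] assms states povms
  unfolding pure_state_def by (cases "L x") auto

lemma success_prob_eq_bias:
  "success_prob n psi M = 1/2 + bias (qdim m) n psi M / (2 * 2 ^ n * 2 ^ 2 ^ n)"
proof -
  define X where "X = bitstrings n"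
  define F where "F = boolfuns n"
  define q where "q = (\<lambda>x L. Re (cinner (qdim m) (mat_app (qdim m) (observable (M x False) (M x True))
    (vec_fn (psi L))) (vec_fn (psi L))))"
  have "(\<Sum>x\<in>X. \<Sum>L\<in>F. outcome_prob (M x (L x)) (psi L)) = (\<Sum>L\<in>F. \<Sum>x\<in>X. 1/2 + bool_sign (L x) / 2 * q x L)"
    unfolding X_def F_def q_def by (subst sum.swap) (simp add: outcome_prob_answer)
  also have "\<dots> = real (card X) * real (card F) / 2 + bias (qdim m) n psi M / 2"
    unfolding bias_def Re_cinner_signed_sum q_def X_def F_def
    by (simp add: sum.distrib sum_divide_distrib sum_distrib_left mult_ac)
  finally show ?thesis
    unfolding success_prob_def X_def F_def card_bitstrings card_boolfuns by (simp add: field_simps)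
qed

lemma success_prob_le_1: "success_prob n psi M \<le> 1"
proof -
  have le_1: "outcome_prob (M x (L x)) (psi L) \<le> 1" if "x \<in> bitstrings n" "L \<in> boolfuns n" for x L
    using outcome_prob_le_1[of "qdim m" "M x False" "M x True" "psi L" "L x"] that states povms
    unfolding pure_state_def by (cases "L x") auto
  have "(\<Sum>x\<in>bitstrings n. \<Sum>L\<in>boolfuns n. outcome_prob (M x (L x)) (psi L))
      \<le> (\<Sum>x\<in>bitstrings n. \<Sum>L\<in>boolfuns n. 1)"
    by (intro sum_mono le_1)
  then have "(\<Sum>x\<in>bitstrings n. \<Sum>L\<in>boolfuns n. outcome_prob (M x (L x)) (psi L))
      \<le> real (card (bitstrings n)) * real (card (boolfuns n))"
    by simp
  then show ?thesis unfolding success_prob_def by (simp add: divide_le_eq_1 card_bitstrings card_boolfuns)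
qed

text \<open>Without qubits every state is a phase, so each \<open>\<langle>A\<^sub>x \<psi>\<^sub>L, \<psi>\<^sub>L\<rangle>\<close> is independent of \<open>L\<close>
  and the random signs cancel.\<close>

lemma bias_no_qubits:
  assumes "m = 0"
  shows "bias (qdim m) n psi M = 0"
proof -
  define a where "a = (\<lambda>x. Re (observable (M x False) (M x True) 0 0))"
  have d1: "qdim m = 1" using assms by (simp add: qdim_def)
  have phase: "Re (cinner (qdim m) (mat_app (qdim m) (observable (M x False) (M x True)) (vec_fn (psi L)))
      (vec_fn (psi L))) = a x" if "L \<in> boolfuns n" for x L
  proof -
    have "sqnorm (qdim m) (vec_fn (psi L)) = 1" using sqnorm_vec_fn_pure_state states that by blast
    then have "(cmod (vec_fn (psi L) 0))^2 = 1" unfolding d1 sqnorm_def by simp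
    then show ?thesis
      unfolding d1 a_def by (simp add: cinner_def mat_app_def mult.assoc flip: complex_norm_square)
  qed
  have "bias (qdim m) n psi M = (\<Sum>L\<in>boolfuns n. \<Sum>x\<in>bitstrings n. bool_sign (L x) * a x)"
    unfolding bias_def Re_cinner_signed_sum by (intro sum.cong refl) (simp add: phase)
  also have "\<dots> = (\<Sum>x\<in>bitstrings n. a x * (\<Sum>L\<in>boolfuns n. bool_sign (L x)))"
    by (subst sum.swap) (simp add: sum_distrib_left mult.commute)
  also have "\<dots> = 0"
    by (simp add: boolfuns_def sum_bool_sign_eq_0[OF finite_bitstrings])
  finally show ?thesis .
qed

lemma success_prob_le_sqrt:
  assumes "1 \<le> m" "2 * m \<le> 2 ^ n"
  shows "success_prob n psi M \<le> 1/2 + 5 * sqrt (real m / 2 ^ n)"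
proof -
  have herm: "\<forall>x\<in>bitstrings n. hermitian_on (2 ^ m) (observable (M x False) (M x True))"
    and contr: "\<forall>x\<in>bitstrings n. contraction_on (2 ^ m) (observable (M x False) (M x True))"
    using povms hermitian_on_observable contraction_on_observable unfolding qdim_def by blast+
  have unit: "\<forall>L\<in>bitstrings n \<rightarrow>\<^sub>E (UNIV::bool set).
      sqnorm (2 ^ m) (vec_fn (psi L)) = 1 \<and> (\<forall>j\<ge>2 ^ m. vec_fn (psi L) j = 0)"
  proof
    fix L assume "L \<in> bitstrings n \<rightarrow>\<^sub>E (UNIV::bool set)"
    then have "pure_state m (psi L)" using states unfolding boolfuns_def by blast
    then show "sqnorm (2 ^ m) (vec_fn (psi L)) = 1 \<and> (\<forall>j\<ge>2 ^ m. vec_fn (psi L) j = 0)"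
      using sqnorm_vec_fn_pure_state unfolding pure_state_def qdim_def vec_fn_def by auto
  qed
  have "2 * m \<le> card (bitstrings n)" using assms(2) by (simp add: card_bitstrings)
  from sum_quadratic_form_signed_sum_le[OF finite_bitstrings assms(1) this herm contr unit]
  have "bias (qdim m) n psi M \<le> 2 ^ 2 ^ n * (10 * sqrt (real m * 2 ^ n))"
    unfolding bias_def boolfuns_def card_bitstrings qdim_def by simp
  then have "bias (qdim m) n psi M / (2 * 2 ^ n * 2 ^ 2 ^ n) \<le> 5 * (sqrt (real m * 2 ^ n) / 2 ^ n)"
    by (simp add: divide_le_eq field_simps)
  also have "sqrt (real m * 2 ^ n) / 2 ^ n = sqrt (real m / 2 ^ n)"
    by (simp add: real_sqrt_divide real_sqrt_mult field_simps)
  finally show ?thesis unfolding success_prob_eq_bias by simp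
qed

end

lemma sqrt_le_powr_one_third:
  fixes r :: real
  assumes "0 \<le> r" "r \<le> 1"
  shows "sqrt r \<le> r powr (1/3)"
proof -
  have "sqrt r = r powr (1/2)" using assms(1) by (simp add: powr_half_sqrt)
  also have "\<dots> \<le> r powr (1/3)" by (rule powr_mono') (use assms in auto)
  finally show ?thesis .
qed

lemma powr_one_third_ge_half:
  fixes r :: real
  assumes r: "1/2 \<le> r"
  shows "1/2 \<le> r powr (1/3)"
proof -
  have "(1/2::real) = (1/2) powr 1" by simp
  also have "\<dots> \<le> (1/2) powr (1/3)" by (rule powr_mono') auto
  also have "\<dots> \<le> r powr (1/3)" using r by (intro powr_mono2) auto
  finally show ?thesis .
qed

theorem mainTheorem10:
  fixes p :: "nat \<Rightarrow> nat"
  shows "\<exists>C::real. \<forall>n::nat. \<forall>(psi :: (bool list \<Rightarrow> bool) \<Rightarrow> complex vec)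
           (M :: bool list \<Rightarrow> bool \<Rightarrow> complex mat).
           (\<forall>L \<in> boolfuns n. pure_state (p n) (psi L)) \<longrightarrow>
           (\<forall>x \<in> bitstrings n. binary_povm (qdim (p n)) (M x False) (M x True)) \<longrightarrow>
           success_prob n psi M \<le> 1/2 + C * (real (p n) / 2 ^ n) powr (1/3)"
proof (intro exI[of _ 5] allI impI)
  fix n psi M
  assume states: "\<forall>L \<in> boolfuns n. pure_state (p n) (psi L)"
    and povms: "\<forall>x \<in> bitstrings n. binary_povm (qdim (p n)) (M x False) (M x True)"
  define r :: real where "r = real (p n) / 2 ^ n"
  consider "p n = 0" | "1 \<le> p n" "2 * p n \<le> 2 ^ n" | "2 ^ n < 2 * p n" by linarith
  then show "success_prob n psi M \<le> 1/2 + 5 * r powr (1/3)"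
  proof cases
    case 1
    then have "success_prob n psi M = 1/2"
      using success_prob_eq_bias[OF states povms] bias_no_qubits[OF states povms] by simp
    then show ?thesis using powr_ge_zero[of r "1/3"] by linarith
  next
    case 2
    then have "r \<le> 1" unfolding r_def by (simp add: divide_le_eq)
    then have "sqrt r \<le> r powr (1/3)" by (simp add: sqrt_le_powr_one_third r_def)
    then show ?thesis using success_prob_le_sqrt[OF states povms 2] unfolding r_def by simp
  next
    case 3
    have "real (2 ^ n) \<le> real (2 * p n)" using 3 by (subst of_nat_le_iff) simp
    then have "1/2 \<le> r" unfolding r_def by (simp add: le_divide_eq)
    then show ?thesis using powr_one_third_ge_half success_prob_le_1[OF states povms] by fastforce
  qed
qed

end
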